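(* Let $L$ be an orthomodular lattice in which every Mayet-Godowski equation holds. Then $L$ satisfies $n$-Go for every $n\ge3$.
   Context: An orthomodular lattice is a bounded lattice with an operation $'$ satisfying $a''=a$, $a\le b\Rightarrow b'\le a'$, $a\cap a'=0$ and $a\cup a'=1$, in which moreover $a\le b$ implies $b=a\cup(a'\cap b)$. Write $a\perp b$ for $a\le b'$ and $a\to b=a'\cup(a\cap b)$. $n$-Go is the equation $$(a_1\to a_2)\cap(a_2\to a_3)\cap\cdots\cap(a_{n-1}\to a_n)\cap(a_n\to a_1)=(a_n\to a_{n-1})\cap\cdots\cap(a_2\to a_1)\cap(a_1\to a_n).$$ A Mayet-Godowski equation (MGE) is a conditional equality $t_1\cap\cdots\cap t_n=u_1\cap\cdots\cap u_n$, $n\ge2$. Each $t_i$ and $u_i$ is a single variable or a join of two or more distinct variables. The hypotheses are that variables in the same term are mutually orthogonal, and each variable must occur the same number of times among the $t_i$ as among the $u_i$. It holds in $L$ if the equality is true for all assignments satisfying the orthogonality hypotheses. *)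

theory Defs
  imports Main "HOL-Library.Complemented_Lattices"
begin

definition orth :: "'a::orthomodular_lattice \<Rightarrow> 'a \<Rightarrow> bool" where
  "orth a b \<longleftrightarrow> a \<le> - b"

definition imp :: "'a::orthomodular_lattice \<Rightarrow> 'a \<Rightarrow> 'a" where
  "imp a b = sup (- a) (inf a b)"

definition meet_list :: "'a::orthomodular_lattice list \<Rightarrow> 'a" where
  "meet_list xs = foldr inf xs top"

definition join_list :: "'a::orthomodular_lattice list \<Rightarrow> 'a" where
  "join_list xs = foldr sup xs bot"

text \<open>A term of an MGE is a nonempty list of distinct variables (natural numbers),
  read as the join of these variables (a single variable when the list has length 1).\<close>

definition mge_term :: "nat list \<Rightarrow> bool" where
  "mge_term t \<longleftrightarrow> t \<noteq> [] \<and> distinct t"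

definition is_mge :: "nat list list \<Rightarrow> nat list list \<Rightarrow> bool" where
  "is_mge ts us \<longleftrightarrow> length ts = length us \<and> length ts \<ge> 2
     \<and> (\<forall>t \<in> set ts. mge_term t) \<and> (\<forall>u \<in> set us. mge_term u)
     \<and> (\<forall>v. length (filter (\<lambda>t. v \<in> set t) ts) = length (filter (\<lambda>u. v \<in> set u) us))"

definition eval_term :: "(nat \<Rightarrow> 'a::orthomodular_lattice) \<Rightarrow> nat list \<Rightarrow> 'a" where
  "eval_term f t = join_list (map f t)"

definition term_orth :: "(nat \<Rightarrow> 'a::orthomodular_lattice) \<Rightarrow> nat list \<Rightarrow> bool" where
  "term_orth f t \<longleftrightarrow> (\<forall>x \<in> set t. \<forall>y \<in> set t. x \<noteq> y \<longrightarrow> orth (f x) (f y))"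

definition mge_holds :: "'a::orthomodular_lattice itself \<Rightarrow> nat list list \<Rightarrow> nat list list \<Rightarrow> bool" where
  "mge_holds _ ts us \<longleftrightarrow> (\<forall>f :: nat \<Rightarrow> 'a.
     (\<forall>t \<in> set ts. term_orth f t) \<and> (\<forall>u \<in> set us. term_orth f u) \<longrightarrow>
     meet_list (map (eval_term f) ts) = meet_list (map (eval_term f) us))"

definition all_mge_hold :: "'a::orthomodular_lattice itself \<Rightarrow> bool" where
  "all_mge_hold T \<longleftrightarrow> (\<forall>ts us. is_mge ts us \<longrightarrow> mge_holds T ts us)"

text \<open>n-Go with variables a_1..a_n renamed a 0 .. a (n-1):
  (a1\<rightarrow>a2)\<and>...\<and>(a(n-1)\<rightarrow>an)\<and>(an\<rightarrow>a1) = (an\<rightarrow>a(n-1))\<and>...\<and>(a2\<rightarrow>a1)\<and>(a1\<rightarrow>an).\<close>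
definition n_go :: "'a::orthomodular_lattice itself \<Rightarrow> nat \<Rightarrow> bool" where
  "n_go _ n \<longleftrightarrow> (\<forall>a :: nat \<Rightarrow> 'a.
     meet_list (map (\<lambda>i. imp (a i) (a (i+1))) [0..<n-1] @ [imp (a (n-1)) (a 0)])
   = meet_list (map (\<lambda>i. imp (a (i+1)) (a i)) (rev [0..<n-1]) @ [imp (a 0) (a (n-1))]))"

end

theory Submission
  imports Defs "HOL-Library.Multiset"
begin

text \<open>
  Put \<open>s i = (i + 1) mod n\<close> for the cyclic successor.
  Both sides of n-Go are meets over i < n of joins of two orthogonal elements:
  \<open>a i \<rightarrow> a (s i) = -a i \<squnion> (a i \<sqinter> a (s i))\<close> and
  \<open>a (s i) \<rightarrow> a i = -a (s i) \<squnion> (a i \<sqinter> a (s i))\<close>.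
  With variables \<open>x i = -a i\<close> and \<open>y i = a i \<sqinter> a (s i)\<close>, the equation
  \<open>\<Sqinter>\<^sub>i (x i \<squnion> y i) = \<Sqinter>\<^sub>i (x (s i) \<squnion> y i)\<close> is a Mayet-Godowski equation:
  each x- and each y-variable occurs exactly once on either side, since s permutes {0..<n}.

  The argument only needs n \<ge> 2 (the minimal number of terms of an MGE).
\<close>

lemma meet_list_append: "meet_list (xs @ ys) = inf (meet_list xs) (meet_list ys)"
  by (induction xs) (auto simp: meet_list_def inf_assoc)

lemma meet_list_rev: "meet_list (rev xs) = meet_list xs"
  by (induction xs) (simp_all add: meet_list_append, simp add: meet_list_def inf_commute)

lemma meet_list_upt_last:
  assumes "n > 0"
  shows "meet_list (map g [0..<n]) = meet_list (map g [0..<n-1] @ [g (n-1)])"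
proof -
  have "[0..<n] = [0..<n-1] @ [n-1]"
    using assms by (metis Suc_diff_1 upt_Suc_append zero_le)
  then show ?thesis by simp
qed

lemma terms_containing_eq_count:
  assumes "\<forall>t \<in> set ts. distinct t"
  shows "length (filter (\<lambda>t. v \<in> set t) ts) = count (mset (concat ts)) v"
  using assms by (induction ts) (simp_all add: distinct_count_atmost_1)

lemma is_mge_if_same_variables:
  assumes "length ts = length us" "length ts \<ge> 2"
    and "\<forall>t \<in> set ts. mge_term t" "\<forall>u \<in> set us. mge_term u"
    and "mset (concat ts) = mset (concat us)"
  shows "is_mge ts us"
  using assms by (simp add: is_mge_def mge_term_def terms_containing_eq_count)

lemma mset_concat_pairs:
  "mset (concat (map (\<lambda>i. [F i, G i]) xs)) = mset (map F xs) + mset (map G xs)"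
  by (induction xs) (simp_all add: add_mset_commute)

lemma mset_map_cyclic_succ_upt:
  assumes "n > 0"
  shows "mset (map (\<lambda>i. (i + 1) mod n) [0..<n]) = mset [0..<n]"
proof -
  obtain m where n: "n = Suc m" using assms by (cases n) auto
  have "map (\<lambda>i. (i + 1) mod n) [0..<m] = map Suc [0..<m]"
    by (rule map_cong) (simp_all add: n)
  then have "map (\<lambda>i. (i + 1) mod n) [0..<n] = [1..<n] @ [0]"
    by (simp add: n map_Suc_upt)
  then show ?thesis
    by (simp add: n upt_conv_Cons del: upt_Suc)
qed

lemma cyclic_mge:
  fixes x y :: "nat \<Rightarrow> 'a::orthomodular_lattice"
  assumes all_mge: "all_mge_hold TYPE('a)" and n: "n \<ge> 2"
    and orth_here: "\<And>i. i < n \<Longrightarrow> orth (x i) (y i)"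
    and orth_next: "\<And>i. i < n \<Longrightarrow> orth (x ((i + 1) mod n)) (y i)"
  shows "meet_list (map (\<lambda>i. sup (x i) (y i)) [0..<n])
       = meet_list (map (\<lambda>i. sup (x ((i + 1) mod n)) (y i)) [0..<n])"
proof -
  define ts where "ts = map (\<lambda>i. [i, n + i]) [0..<n]"
  define us where "us = map (\<lambda>i. [(i + 1) mod n, n + i]) [0..<n]"
  define f :: "nat \<Rightarrow> 'a" where "f v = (if v < n then x v else y (v - n))" for v
  have succ_less: "Suc i mod n < n" for i
    using n by simp
  then have succ_ne: "Suc i mod n \<noteq> n + j" for i j
    by (metis add_lessD1 less_irrefl)
  have "mset (concat us) = mset [0..<n] + mset (map ((+) n) [0..<n])"
    using n by (simp only: us_def mset_concat_pairs mset_map_cyclic_succ_upt)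
  also have "\<dots> = mset (concat ts)"
    by (simp only: ts_def mset_concat_pairs list.map_id0[unfolded id_def])
  finally have "is_mge ts us"
    using n succ_less succ_ne by (intro is_mge_if_same_variables) (auto simp: ts_def us_def mge_term_def)
  moreover have "\<forall>t \<in> set ts. term_orth f t" "\<forall>u \<in> set us. term_orth f u"
    using orth_here orth_next succ_less
    by (auto simp: ts_def us_def term_orth_def f_def orth_def compl_le_swap1)
  ultimately have "meet_list (map (eval_term f) ts) = meet_list (map (eval_term f) us)"
    using all_mge unfolding all_mge_hold_def mge_holds_def by blast
  moreover have "map (eval_term f) ts = map (\<lambda>i. sup (x i) (y i)) [0..<n]"
    unfolding ts_def map_map
    by (rule map_cong) (simp_all add: eval_term_def join_list_def f_def)
  moreover have "map (eval_term f) us = map (\<lambda>i. sup (x ((i + 1) mod n)) (y i)) [0..<n]"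
    unfolding us_def map_map
    by (rule map_cong) (simp_all add: eval_term_def join_list_def f_def succ_less)
  ultimately show ?thesis
    by simp
qed

text \<open>\<open>a \<sqinter> b\<close> is orthogonal to both \<open>-a\<close> and \<open>-b\<close>, so both implications between
  a and b are joins of orthogonal elements sharing the component \<open>a \<sqinter> b\<close>.\<close>
lemma orth_compl_inf: "orth (- a) (inf a b)" "orth (- b) (inf a b)"
  by (simp_all add: orth_def)

theorem theorem6p5:
  assumes "all_mge_hold TYPE('a::orthomodular_lattice)"
    and "n \<ge> 3"
  shows "n_go TYPE('a) n"
  unfolding n_go_def
proof
  fix a :: "nat \<Rightarrow> 'a"
  let ?s = "\<lambda>i. (i + 1) mod n"
  have n: "n \<ge> 2" "n > 0" using assms(2) by simp_all
  have cyclic: "meet_list (map (\<lambda>i. imp (a i) (a (?s i))) [0..<n])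
      = meet_list (map (\<lambda>i. imp (a (?s i)) (a i)) [0..<n])"
    using cyclic_mge[OF assms(1) n(1), of "\<lambda>i. - a i" "\<lambda>i. inf (a i) (a (?s i))"]
    by (simp add: orth_compl_inf imp_def inf_commute)
  have below_last:
    "map (\<lambda>i. imp (a i) (a (?s i))) [0..<n-1] = map (\<lambda>i. imp (a i) (a (i + 1))) [0..<n-1]"
    "map (\<lambda>i. imp (a (?s i)) (a i)) [0..<n-1] = map (\<lambda>i. imp (a (i + 1)) (a i)) [0..<n-1]"
    by (rule map_cong; simp)+
  have last: "?s (n - 1) = 0"
    using n by simp
  show "meet_list (map (\<lambda>i. imp (a i) (a (i + 1))) [0..<n - 1] @ [imp (a (n - 1)) (a 0)])
      = meet_list (map (\<lambda>i. imp (a (i + 1)) (a i)) (rev [0..<n - 1]) @ [imp (a 0) (a (n - 1))])"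
    using cyclic unfolding meet_list_upt_last[OF n(2)] below_last last
    by (simp add: meet_list_append rev_map[symmetric] meet_list_rev)
qed

end
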